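(* Let $N$ be a positive integer and $L,Q,R,S$ constant complex $N\times N$ matrices, $H=\begin{pmatrix}R&Q\\S&L\end{pmatrix}$, $H^n=\begin{pmatrix}R_n&Q_n\\S_n&L_n\end{pmatrix}$. Fix a sign $\pm$. If the $N\times N$ matrix function $\Phi$ of $\mathbf{t}=(t_1,t_2,t_3,\ldots)$ solves the Riccati hierarchy $\Phi_{t_n}=S_n+L_n\Phi-\Phi R_n-\Phi Q_n\Phi$ ($n=1,2,3,\ldots$) with data $(L,R,Q,S)$, then $\pm\Phi^\intercal\circ\varepsilon$ solves the Riccati hierarchy with data $(-R^\intercal,-L^\intercal,\pm Q^\intercal,\pm S^\intercal)$ in place of $(L,R,Q,S)$ (i.e. the transformation $L\mapsto-R^\intercal$, $R\mapsto-L^\intercal$, $Q\mapsto\pm Q^\intercal$, $S\mapsto\pm S^\intercal$, $\Phi\mapsto\pm\Phi^\intercal\circ\varepsilon$ leaves the Riccati hierarchy invariant), where $\varepsilon(t_1,t_2,t_3,t_4,\ldots)=(t_1,-t_2,t_3,-t_4,\ldots)$.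
   Context: ${}^\intercal$ denotes the transpose. For the transformed data, the matrices $R_n,Q_n,S_n,L_n$ in the hierarchy are the blocks of the $n$-th power of the transformed matrix $H$. *)

theory Defs
  imports "HOL-Analysis.Analysis" "Jordan_Normal_Form.Matrix"
begin

text \<open>Times t = (t_1, t_2, ...) are modelled as sequences nat => real; index 0 is unused.\<close>

definition eps :: "(nat \<Rightarrow> real) \<Rightarrow> (nat \<Rightarrow> real)" where
  "eps t = (\<lambda>k. if 1 \<le> k \<and> even k then - t k else t k)"

definition has_tderiv ::
  "((nat \<Rightarrow> real) \<Rightarrow> complex mat) \<Rightarrow> nat \<Rightarrow> (nat \<Rightarrow> real) \<Rightarrow> complex mat \<Rightarrow> bool" where
  "has_tderiv \<Phi> n t D \<longleftrightarrow>
     (\<forall>i < dim_row D. \<forall>j < dim_col D.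
        ((\<lambda>s. \<Phi> (t(n := s)) $$ (i, j)) has_vector_derivative D $$ (i, j)) (at (t n)))"

definition Hmat :: "complex mat \<Rightarrow> complex mat \<Rightarrow> complex mat \<Rightarrow> complex mat \<Rightarrow> complex mat" where
  "Hmat L R Q S = four_block_mat R Q S L"

definition Hblocks :: "nat \<Rightarrow> complex mat \<Rightarrow> complex mat \<Rightarrow> complex mat \<Rightarrow> complex mat \<Rightarrow> nat
    \<Rightarrow> complex mat \<times> complex mat \<times> complex mat \<times> complex mat" where
  "Hblocks N L R Q S n = split_block (Hmat L R Q S ^\<^sub>m n) N N"

definition riccati_sol :: "nat \<Rightarrow> complex mat \<Rightarrow> complex mat \<Rightarrow> complex mat \<Rightarrow> complex mat
    \<Rightarrow> ((nat \<Rightarrow> real) \<Rightarrow> complex mat) \<Rightarrow> bool" where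
  "riccati_sol N L R Q S \<Phi> \<longleftrightarrow>
     (\<forall>t. \<Phi> t \<in> carrier_mat N N) \<and>
     (\<forall>n \<ge> 1. \<forall>t. case Hblocks N L R Q S n of (Rk, Qk, Sk, Lk) \<Rightarrow>
        has_tderiv \<Phi> n t (Sk + Lk * \<Phi> t - \<Phi> t * Rk - \<Phi> t * Qk * \<Phi> t))"

end

theory Submission
  imports Defs
begin

text \<open>Let J = diag(1, -\<sigma>) and let P swap the two block rows. The transformed matrix is
  H' = -(J P) H^T (P J), and P J inverts J P since J and P are involutions; hence
  H'^n = (-1)^n (J P) (H^n)^T (P J), whose blocks are (-1)^n L_n^T, -(-1)^n \<sigma> Q_n^T,
  -(-1)^n \<sigma> S_n^T and (-1)^n R_n^T. On the other side, the t_n-derivative of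
  \<sigma> \<Phi>^T \<circ> \<epsilon> is (-1)^(n+1) \<sigma> (\<Phi>_{t_n})^T \<circ> \<epsilon>. Transposing the n-th Riccati equation
  for \<Phi> and multiplying it by (-1)^(n+1) \<sigma> yields, thanks to \<sigma>^2 = 1, exactly the n-th
  equation for the new data.\<close>

lemma pow_mat_Suc_left:
  assumes "A \<in> carrier_mat m m"
  shows "A ^\<^sub>m Suc n = A * A ^\<^sub>m n"
proof (induction n)
  case 0
  then show ?case using assms by simp
next
  case (Suc n)
  have "A ^\<^sub>m Suc (Suc n) = (A * A ^\<^sub>m n) * A" using Suc by simp
  also have "\<dots> = A * A ^\<^sub>m Suc n" using assms by (simp add: assoc_mult_mat[of _ m m _ m _ m])
  finally show ?case .
qed

lemma pow_mat_signed_transpose: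
  fixes A B :: "'a :: comm_ring_1 mat" and s :: "nat \<Rightarrow> 'a" and p :: "nat \<Rightarrow> nat"
  assumes A: "A \<in> carrier_mat m m" and B: "B \<in> carrier_mat m m"
    and B_eq: "\<And>i j. i < m \<Longrightarrow> j < m \<Longrightarrow> B $$ (i, j) = - (s i * s j * A $$ (p j, p i))"
    and s: "\<And>i. i < m \<Longrightarrow> s i * s i = 1"
    and p: "bij_betw p {..<m} {..<m}"
    and ij: "i < m" "j < m"
  shows "(B ^\<^sub>m n) $$ (i, j) = (-1) ^ n * s i * s j * (A ^\<^sub>m n) $$ (p j, p i)"
  using ij
proof (induction n arbitrary: i j)
  case 0
  have "p i < m" "p j < m" "p j = p i \<longleftrightarrow> i = j"
    using p 0 by (auto simp: bij_betw_def inj_on_def)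
  then show ?case using 0 A B s[of i] by auto
next
  case (Suc n)
  have pm: "\<And>k. k < m \<Longrightarrow> p k < m" using p by (auto simp: bij_betw_def)
  have "(B ^\<^sub>m Suc n) $$ (i, j) = (\<Sum>k<m. (B ^\<^sub>m n) $$ (i, k) * B $$ (k, j))"
    using Suc.prems B by (simp add: scalar_prod_def lessThan_atLeast0)
  also have "\<dots> = (\<Sum>k<m. (-1) ^ Suc n * s i * s j * (A $$ (p j, p k) * (A ^\<^sub>m n) $$ (p k, p i)))"
  proof (rule sum.cong[OF refl])
    fix k assume "k \<in> {..<m}"
    then have "(B ^\<^sub>m n) $$ (i, k) * B $$ (k, j)
        = (-1) ^ n * s i * s k * (A ^\<^sub>m n) $$ (p k, p i) * - (s k * s j * A $$ (p j, p k))"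
      using Suc B_eq by simp
    also have "\<dots> = (-1) ^ Suc n * s i * s j * (s k * s k) * (A $$ (p j, p k) * (A ^\<^sub>m n) $$ (p k, p i))"
      by (simp add: algebra_simps)
    finally show "(B ^\<^sub>m n) $$ (i, k) * B $$ (k, j)
        = (-1) ^ Suc n * s i * s j * (A $$ (p j, p k) * (A ^\<^sub>m n) $$ (p k, p i))"
      using s \<open>k \<in> {..<m}\<close> by simp
  qed
  also have "\<dots> = (-1) ^ Suc n * s i * s j * (\<Sum>k<m. A $$ (p j, p k) * (A ^\<^sub>m n) $$ (p k, p i))"
    by (simp only: sum_distrib_left)
  also have "(\<Sum>k<m. A $$ (p j, p k) * (A ^\<^sub>m n) $$ (p k, p i))
      = (\<Sum>k<m. A $$ (p j, k) * (A ^\<^sub>m n) $$ (k, p i))"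
    using sum.reindex_bij_betw[OF p, of "\<lambda>k. A $$ (p j, k) * (A ^\<^sub>m n) $$ (k, p i)"] by simp
  also have "\<dots> = (A ^\<^sub>m Suc n) $$ (p j, p i)"
    unfolding pow_mat_Suc_left[OF A] using A pm Suc.prems by (simp add: scalar_prod_def lessThan_atLeast0)
  finally show ?case .
qed

lemma Hmat_carrier:
  assumes "L \<in> carrier_mat N N" "R \<in> carrier_mat N N" "Q \<in> carrier_mat N N" "S \<in> carrier_mat N N"
  shows "Hmat L R Q S \<in> carrier_mat (N + N) (N + N)"
  unfolding Hmat_def using assms by (intro four_block_carrier_mat) auto

lemma Hblocks_carrier:
  assumes "L \<in> carrier_mat N N" "R \<in> carrier_mat N N" "Q \<in> carrier_mat N N" "S \<in> carrier_mat N N"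
    and "Hblocks N L R Q S n = (Rk, Qk, Sk, Lk)"
  shows "Rk \<in> carrier_mat N N" "Qk \<in> carrier_mat N N" "Sk \<in> carrier_mat N N" "Lk \<in> carrier_mat N N"
  using split_block[OF assms(5)[unfolded Hblocks_def], of N N] Hmat_carrier[OF assms(1-4)] by auto

lemma pow_Hmat_transform:
  assumes L: "L \<in> carrier_mat N N" and R: "R \<in> carrier_mat N N"
    and Q: "Q \<in> carrier_mat N N" and S: "S \<in> carrier_mat N N"
    and \<sigma>: "\<sigma> * \<sigma> = 1"
    and ij: "i < N + N" "j < N + N"
  shows "(Hmat (- transpose_mat R) (- transpose_mat L) (\<sigma> \<cdot>\<^sub>m transpose_mat Q) (\<sigma> \<cdot>\<^sub>m transpose_mat S)
      ^\<^sub>m n) $$ (i, j)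
    = (-1) ^ n * (if i < N then 1 else - \<sigma>) * (if j < N then 1 else - \<sigma>)
      * (Hmat L R Q S ^\<^sub>m n) $$ (if j < N then j + N else j - N, if i < N then i + N else i - N)"
proof (rule pow_mat_signed_transpose[OF Hmat_carrier[OF L R Q S] _ _ _ _ ij])
  show "Hmat (- transpose_mat R) (- transpose_mat L) (\<sigma> \<cdot>\<^sub>m transpose_mat Q) (\<sigma> \<cdot>\<^sub>m transpose_mat S)
      \<in> carrier_mat (N + N) (N + N)"
    using L R Q S by (intro Hmat_carrier) auto
  show "bij_betw (\<lambda>i. if i < N then i + N else i - N) {..<N + N} {..<N + N}"
    by (rule bij_betw_byWitness[where f'="\<lambda>i. if i < N then i + N else i - N"]) auto
qed (use L R Q S \<sigma> in \<open>auto simp: Hmat_def\<close>)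

lemma Hblocks_transform:
  assumes L: "L \<in> carrier_mat N N" and R: "R \<in> carrier_mat N N"
    and Q: "Q \<in> carrier_mat N N" and S: "S \<in> carrier_mat N N"
    and \<sigma>: "\<sigma> * \<sigma> = 1"
    and blocks: "Hblocks N L R Q S n = (Rk, Qk, Sk, Lk)"
  shows "Hblocks N (- transpose_mat R) (- transpose_mat L) (\<sigma> \<cdot>\<^sub>m transpose_mat Q) (\<sigma> \<cdot>\<^sub>m transpose_mat S) n
    = ((-1) ^ n \<cdot>\<^sub>m transpose_mat Lk, (- ((-1) ^ n * \<sigma>)) \<cdot>\<^sub>m transpose_mat Qk,
       (- ((-1) ^ n * \<sigma>)) \<cdot>\<^sub>m transpose_mat Sk, (-1) ^ n \<cdot>\<^sub>m transpose_mat Rk)"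
proof -
  have H: "Hmat L R Q S \<in> carrier_mat (N + N) (N + N)" by (rule Hmat_carrier[OF L R Q S])
  have H': "Hmat (- transpose_mat R) (- transpose_mat L) (\<sigma> \<cdot>\<^sub>m transpose_mat Q) (\<sigma> \<cdot>\<^sub>m transpose_mat S)
      \<in> carrier_mat (N + N) (N + N)"
    using L R Q S by (intro Hmat_carrier) auto
  from blocks have "Rk = mat N N (\<lambda>ij. (Hmat L R Q S ^\<^sub>m n) $$ ij)"
    and "Qk = mat N N (\<lambda>(i, j). (Hmat L R Q S ^\<^sub>m n) $$ (i, j + N))"
    and "Sk = mat N N (\<lambda>(i, j). (Hmat L R Q S ^\<^sub>m n) $$ (i + N, j))"
    and "Lk = mat N N (\<lambda>(i, j). (Hmat L R Q S ^\<^sub>m n) $$ (i + N, j + N))"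
    unfolding Hblocks_def split_block_def Let_def using H by auto
  then show ?thesis
    unfolding Hblocks_def split_block_def Let_def using H H' \<sigma>
    by (auto simp: pow_Hmat_transform[OF L R Q S \<sigma>] intro!: eq_matI)
qed

lemma eps_fun_upd:
  assumes "1 \<le> n"
  shows "eps (t(n := s)) = (eps t)(n := (-1) ^ Suc n * s)"
  using assms by (auto simp: eps_def fun_eq_iff)

lemma eps_apply:
  assumes "1 \<le> n"
  shows "eps t n = (-1) ^ Suc n * t n"
  using assms by (auto simp: eps_def)

lemma has_tderiv_eps:
  assumes n: "1 \<le> n" and D: "has_tderiv \<Phi> n (eps t) D"
  shows "has_tderiv (\<lambda>s. \<Phi> (eps s)) n t (((-1) ^ Suc n) \<cdot>\<^sub>m D)"
  unfolding has_tderiv_def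
proof (intro allI impI)
  fix i j assume "i < dim_row (((-1) ^ Suc n) \<cdot>\<^sub>m D)" "j < dim_col (((-1) ^ Suc n) \<cdot>\<^sub>m D)"
  then have ij: "i < dim_row D" "j < dim_col D" by auto
  define e :: real where "e = (-1) ^ Suc n"
  have "((\<lambda>u. \<Phi> ((eps t)(n := u)) $$ (i, j)) has_vector_derivative D $$ (i, j)) (at (e * t n))"
    using D ij eps_apply[OF n] unfolding has_tderiv_def e_def by auto
  then have "(((\<lambda>u. \<Phi> ((eps t)(n := u)) $$ (i, j)) \<circ> (\<lambda>s. e * s))
      has_vector_derivative e *\<^sub>R D $$ (i, j)) (at (t n))"
    by (intro vector_diff_chain_at derivative_eq_intros) auto
  moreover have "e *\<^sub>R D $$ (i, j) = (((-1) ^ Suc n) \<cdot>\<^sub>m D) $$ (i, j)"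
    using ij by (simp add: e_def scaleR_conv_of_real)
  ultimately show "((\<lambda>s. \<Phi> (eps (t(n := s))) $$ (i, j)) has_vector_derivative
      (((-1) ^ Suc n) \<cdot>\<^sub>m D) $$ (i, j)) (at (t n))"
    by (simp add: eps_fun_upd[OF n] e_def o_def)
qed

lemma has_tderiv_smult_transpose:
  assumes \<Phi>: "\<And>s. \<Phi> s \<in> carrier_mat m k" and D: "D \<in> carrier_mat m k"
    and deriv: "has_tderiv \<Phi> n t D"
  shows "has_tderiv (\<lambda>s. a \<cdot>\<^sub>m transpose_mat (\<Phi> s)) n t (a \<cdot>\<^sub>m transpose_mat D)"
  unfolding has_tderiv_def
proof (intro allI impI)
  fix i j assume "i < dim_row (a \<cdot>\<^sub>m transpose_mat D)" "j < dim_col (a \<cdot>\<^sub>m transpose_mat D)"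
  then have ij: "i < k" "j < m" using D by auto
  have "((\<lambda>s. \<Phi> (t(n := s)) $$ (j, i)) has_vector_derivative D $$ (j, i)) (at (t n))"
    using deriv ij D unfolding has_tderiv_def by auto
  then have "((\<lambda>s. a * \<Phi> (t(n := s)) $$ (j, i)) has_vector_derivative a * D $$ (j, i)) (at (t n))"
    by (rule has_vector_derivative_mult_right)
  then show "((\<lambda>s. (a \<cdot>\<^sub>m transpose_mat (\<Phi> (t(n := s)))) $$ (i, j)) has_vector_derivative
      (a \<cdot>\<^sub>m transpose_mat D) $$ (i, j)) (at (t n))"
    using ij D \<Phi>[THEN carrier_matD(1)] \<Phi>[THEN carrier_matD(2)] by simp
qed

lemma smult_mult_smult_mat:
  assumes "A \<in> carrier_mat m n" "B \<in> carrier_mat n k"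
  shows "(a \<cdot>\<^sub>m A) * (b \<cdot>\<^sub>m B) = (a * b :: 'a :: comm_ring_1) \<cdot>\<^sub>m (A * B)"
  by (rule eq_matI) (use assms in \<open>auto simp: scalar_prod_def sum_distrib_left algebra_simps\<close>)

lemma riccati_rhs_transpose:
  fixes Rk Qk Sk Lk X :: "'a :: comm_ring_1 mat" and c \<sigma> :: 'a
  assumes carrier: "Rk \<in> carrier_mat N N" "Qk \<in> carrier_mat N N" "Sk \<in> carrier_mat N N"
      "Lk \<in> carrier_mat N N" "X \<in> carrier_mat N N"
    and \<sigma>: "\<sigma> * \<sigma> = 1"
  defines "\<Psi> \<equiv> \<sigma> \<cdot>\<^sub>m transpose_mat X"
  shows "(- (c * \<sigma>)) \<cdot>\<^sub>m transpose_mat Sk + (c \<cdot>\<^sub>m transpose_mat Rk) * \<Psi>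
      - \<Psi> * (c \<cdot>\<^sub>m transpose_mat Lk) - \<Psi> * ((- (c * \<sigma>)) \<cdot>\<^sub>m transpose_mat Qk) * \<Psi>
    = \<sigma> \<cdot>\<^sub>m transpose_mat ((- c) \<cdot>\<^sub>m (Sk + Lk * X - X * Rk - X * Qk * X))"
proof -
  have cubic: "\<Psi> * ((- (c * \<sigma>)) \<cdot>\<^sub>m transpose_mat Qk) * \<Psi>
      = (- (c * \<sigma>)) \<cdot>\<^sub>m (transpose_mat X * transpose_mat Qk * transpose_mat X)"
  proof -
    have "\<sigma> * (- (c * \<sigma>)) * \<sigma> = - (c * \<sigma>) * (\<sigma> * \<sigma>)" by (simp add: algebra_simps)
    then show ?thesis
      unfolding \<Psi>_def using carrier \<sigma> by (simp add: smult_mult_smult_mat[of _ N N _ N])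
  qed
  have "\<sigma> \<cdot>\<^sub>m transpose_mat ((- c) \<cdot>\<^sub>m (Sk + Lk * X - X * Rk - X * Qk * X))
      = (- (c * \<sigma>)) \<cdot>\<^sub>m transpose_mat (Sk + Lk * X - X * Rk - X * Qk * X)"
    by (rule eq_matI) auto
  also have "transpose_mat (Sk + Lk * X - X * Rk - X * Qk * X) = transpose_mat Sk
      + transpose_mat X * transpose_mat Lk - transpose_mat Rk * transpose_mat X
      - transpose_mat X * transpose_mat Qk * transpose_mat X"
    using carrier by (simp add: transpose_add[of _ N N] transpose_minus[of _ N N] transpose_mult[of _ N N _ N]
        minus_carrier_mat)
  finally show ?thesis
    unfolding cubic unfolding \<Psi>_def using carrier
    by (intro eq_matI) (auto simp: smult_mult_smult_mat[of _ N N _ N] algebra_simps)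
qed

theorem lemma5p1:
  fixes N :: nat and L R Q S :: "complex mat" and \<sigma> :: complex
    and \<Phi> :: "(nat \<Rightarrow> real) \<Rightarrow> complex mat"
  assumes "N > 0"
    and "L \<in> carrier_mat N N" "R \<in> carrier_mat N N" "Q \<in> carrier_mat N N" "S \<in> carrier_mat N N"
    and "\<sigma> = 1 \<or> \<sigma> = -1"
    and "riccati_sol N L R Q S \<Phi>"
  shows "riccati_sol N (- transpose_mat R) (- transpose_mat L)
           (\<sigma> \<cdot>\<^sub>m transpose_mat Q) (\<sigma> \<cdot>\<^sub>m transpose_mat S)
           (\<lambda>t. \<sigma> \<cdot>\<^sub>m transpose_mat (\<Phi> (eps t)))"
  unfolding riccati_sol_def
proof (intro conjI allI impI)
  note data = assms(2-5)
  have \<sigma>: "\<sigma> * \<sigma> = 1" using assms(6) by auto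
  have \<Phi>: "\<And>t. \<Phi> t \<in> carrier_mat N N" using assms(7) by (simp add: riccati_sol_def)
  then show "\<And>t. \<sigma> \<cdot>\<^sub>m transpose_mat (\<Phi> (eps t)) \<in> carrier_mat N N" by simp
  fix n :: nat and t assume n: "1 \<le> n"
  obtain Rk Qk Sk Lk where blocks: "Hblocks N L R Q S n = (Rk, Qk, Sk, Lk)"
    by (metis prod_cases4)
  note carrier = Hblocks_carrier[OF data blocks] \<Phi>[of "eps t"]
  let ?D = "Sk + Lk * \<Phi> (eps t) - \<Phi> (eps t) * Rk - \<Phi> (eps t) * Qk * \<Phi> (eps t)"
  let ?\<Psi> = "\<lambda>t. \<sigma> \<cdot>\<^sub>m transpose_mat (\<Phi> (eps t))"
  have D: "?D \<in> carrier_mat N N" using carrier by (simp add: minus_carrier_mat)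
  have "has_tderiv \<Phi> n (eps t) ?D"
    using assms(7) n blocks by (auto simp: riccati_sol_def)
  then have "has_tderiv (\<lambda>s. \<Phi> (eps s)) n t ((-1) ^ Suc n \<cdot>\<^sub>m ?D)"
    by (rule has_tderiv_eps[OF n])
  then have "has_tderiv ?\<Psi> n t (\<sigma> \<cdot>\<^sub>m transpose_mat ((-1) ^ Suc n \<cdot>\<^sub>m ?D))"
    by (rule has_tderiv_smult_transpose[OF \<Phi> smult_carrier_mat[OF D]])
  then show "case Hblocks N (- transpose_mat R) (- transpose_mat L) (\<sigma> \<cdot>\<^sub>m transpose_mat Q)
      (\<sigma> \<cdot>\<^sub>m transpose_mat S) n of (Rk, Qk, Sk, Lk) \<Rightarrow>
    has_tderiv ?\<Psi> n t (Sk + Lk * ?\<Psi> t - ?\<Psi> t * Rk - ?\<Psi> t * Qk * ?\<Psi> t)"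
    by (simp add: Hblocks_transform[OF data \<sigma> blocks] riccati_rhs_transpose[OF carrier \<sigma>])
qed

end
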